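(* Let $\mathcal{X}$ be an instance space, $C\ge2$, $\mathcal{Y}=\{e_1,\dots,e_C\}\subset\mathbb{R}^C$, $\mathcal{H}$ a hypothesis space of functions $\mathcal{X}\to\mathcal{Y}$, $\mathcal{D}_{\mathcal{X}}$ a distribution on $\mathcal{X}$, $\rho(h_1,h_2)=\mathbb{P}_{X\sim\mathcal{D}_{\mathcal{X}}}[h_1(X)\neq h_2(X)]$, and fix $g\in\mathcal{H}$. For $x\in\mathcal{X}$ put $\mathcal{H}^{g,x}=\{h\in\mathcal{H}:h(x)\neq g(x)\}$ and $L(g,x)=\inf_{h\in\mathcal{H}^{g,x}}\rho(h,g)$. Assume $\mathcal{H}$ is Polish with metric $d_{\mathcal{H}}$, that $\rho(h,h')\le B\,d_{\mathcal{H}}(h,h')$ for all $h,h'\in\mathcal{H}$ and some $B>0$, and that a randomized procedure outputs finite sets $\mathcal{H}_1\subseteq\mathcal{H}_2\subseteq\cdots\subset\mathcal{H}$, $|\mathcal{H}_N|=N$, satisfying the following coverage condition for each $x_0\in\{x_i,x_j\}$: there exist deterministic $\alpha:\mathbb{N}\times\mathbb{R}_{\ge0}\to\mathbb{R}_{\ge0}$, $\beta:\mathbb{N}\to\mathbb{R}_{>0}$ with $\alpha(N,\varepsilon)\to0$, $\beta(N)\to0$ as $N\to\infty$ for every $\varepsilon\in(0,1)$, and $$\mathbb{P}\Big[\inf_{\substack{h^*\in\mathcal{H}^{g,x_0}\\ \rho(h^*,g)-L(g,x_0)\le\varepsilon}}\ \min_{h\in\mathcal{H}_N^{g,x_0}}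 d_{\mathcal{H}}(h^*,h)\le\tfrac1B\alpha(N,\varepsilon)\Big]\ge1-\beta(N)\quad\forall\varepsilon\in(0,1),$$ with $\mathcal{H}_N^{g,x_0}=\mathcal{H}_N\cap\mathcal{H}^{g,x_0}$. With $X_1,\dots,X_M$ i.i.d. from $\mathcal{D}_{\mathcal{X}}$ (independent of $\mathcal{H}_N$), let $L_{N,M}(g,x)=\inf_{h\in\mathcal{H}_N^{g,x}}\frac1M\sum_{k=1}^M\mathbb{I}[h(X_k)\neq g(X_k)]$. If $L(g,x_i)<L(g,x_j)$, then for any $\varepsilon>0$, $$\lim_{\min(M,N)\to\infty}\mathbb{P}\big[L_{N,M}(g,x_i)>L_{N,M}(g,x_j)+\varepsilon\big]=0,$$ where the limit is taken with $M=\omega(\log(CN))$.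
   Context: $M=\omega(\log(CN))$ means $M/\log(CN)\to\infty$. $\mathbb{I}$ is the indicator function. *)

theory Defs
  imports "HOL-Analysis.Analysis" "HOL-Probability.Probability"
begin

text \<open>Label space: the one-hot vectors e_1, ..., e_C in R^C, where C = CARD('c).\<close>
definition onehots :: "(real^'c) set" where
  "onehots = {axis i 1 | i. True}"

definition rho :: "'x measure \<Rightarrow> ('x \<Rightarrow> 'y) \<Rightarrow> ('x \<Rightarrow> 'y) \<Rightarrow> real" where
  "rho D h1 h2 = measure D {x \<in> space D. h1 x \<noteq> h2 x}"

definition disagree_set :: "('x \<Rightarrow> 'y) set \<Rightarrow> ('x \<Rightarrow> 'y) \<Rightarrow> 'x \<Rightarrow> ('x \<Rightarrow> 'y) set" where
  "disagree_set H g x = {h \<in> H. h x \<noteq> g x}"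

text \<open>L(g,x) = inf_{h \<in> H^{g,x}} rho(h,g)  (extended reals; inf of the empty set is +\<infinity>).\<close>
definition Lopt :: "'x measure \<Rightarrow> ('x \<Rightarrow> 'y) set \<Rightarrow> ('x \<Rightarrow> 'y) \<Rightarrow> 'x \<Rightarrow> ereal" where
  "Lopt D H g x = (INF h\<in>disagree_set H g x. ereal (rho D h g))"

text \<open>Empirical disagreement (1/M) sum_{k=1}^M I[h(X_k) \<noteq> g(X_k)], samples X_1..X_M = xs 0..xs (M-1).\<close>
definition emp_dis :: "nat \<Rightarrow> ('x \<Rightarrow> 'y) \<Rightarrow> ('x \<Rightarrow> 'y) \<Rightarrow> (nat \<Rightarrow> 'x) \<Rightarrow> real" where
  "emp_dis M h g xs = (1 / real M) * (\<Sum>k<M. if h (xs k) \<noteq> g (xs k) then 1 else 0)"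

definition LNM :: "('x \<Rightarrow> 'y) set \<Rightarrow> nat \<Rightarrow> ('x \<Rightarrow> 'y) \<Rightarrow> 'x \<Rightarrow> (nat \<Rightarrow> 'x) \<Rightarrow> ereal" where
  "LNM HN M g x xs = (INF h\<in>disagree_set HN g x. ereal (emp_dis M h g xs))"

end

(* Fix t > 0 and a small e. By Hoeffding's inequality and a union bound over the N sampled
   hypotheses, outside an event of probability at most 2 N exp(-2 M t^2), which vanishes when
   M = omega(log(CN)), every h in H_N has empirical disagreement within t of rho(h, g). On the
   coverage event, of probability at least 1 - beta(N), some h in H_N^{g,x_i} is d_H-close to an
   e-optimal element of H^{g,x_i}; by the Lipschitz bound and the triangle inequality for rho,
   rho(h, g) < L(g,x_i) + eps - 2t. Outside both events therefore
   L_{N,M}(g,x_i) < L(g,x_i) + eps - t <= L(g,x_j) + eps - t <= L_{N,M}(g,x_j) + eps.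
   Only L(g,x_i) <= L(g,x_j) and coverage at x_i are used. *)

theory Submission
  imports Defs
begin

lemma rho_commute: "rho D h1 h2 = rho D h2 h1"
  unfolding rho_def by (metis (full_types))

lemma rho_triangle:
  fixes h1 h2 h3 :: "'x \<Rightarrow> 'y::{second_countable_topology, t2_space}"
  assumes "finite_measure D"
    and [measurable]: "h1 \<in> borel_measurable D" "h2 \<in> borel_measurable D" "h3 \<in> borel_measurable D"
  shows "rho D h1 h3 \<le> rho D h1 h2 + rho D h2 h3"
proof -
  interpret finite_measure D by fact
  have "rho D h1 h3 \<le> measure D ({x \<in> space D. h1 x \<noteq> h2 x} \<union> {x \<in> space D. h2 x \<noteq> h3 x})"
    unfolding rho_def by (intro finite_measure_mono) auto
  also have "\<dots> \<le> rho D h1 h2 + rho D h2 h3"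
    unfolding rho_def by (intro measure_Un_le) auto
  finally show ?thesis .
qed

lemma rho_eq_expectation: "rho D h g = (\<integral>x. (if h x \<noteq> g x then 1 else 0) \<partial>D)"
proof -
  have "(\<integral>x. (if h x \<noteq> g x then 1 else 0) \<partial>D) = (\<integral>x. indicator {x \<in> space D. h x \<noteq> g x} x \<partial>D)"
    by (intro Bochner_Integration.integral_cong) (auto simp: indicator_def)
  also have "\<dots> = measure D ({x \<in> space D. h x \<noteq> g x} \<inter> space D)"
    by (rule Bochner_Integration.integral_indicator)
  finally show ?thesis by (simp add: rho_def inf.absorb1)
qed

lemma (in product_prob_space) indep_vars_coordinates:
  assumes "finite J" "J \<noteq> {}" "J \<subseteq> I"
  shows "P.indep_vars M (\<lambda>i x. x i) J"
proof -
  have "PiM J (\<lambda>i. distr (PiM I M) (M i) (\<lambda>x. x i)) = PiM J M"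
    using \<open>J \<subseteq> I\<close> by (intro PiM_cong) (auto simp: PiM_component)
  then have "distr (PiM I M) (PiM J M) (\<lambda>x. restrict x J) = PiM J (\<lambda>i. distr (PiM I M) (M i) (\<lambda>x. x i))"
    using assms distr_PiM_restrict_finite[of J] by simp
  then show ?thesis
    using assms by (subst P.indep_vars_iff_distr_eq_PiM') auto
qed

lemma emp_dis_hoeffding:
  fixes h g :: "'x \<Rightarrow> 'y::{second_countable_topology, t2_space}"
  assumes D: "prob_space D" and [measurable]: "h \<in> borel_measurable D" "g \<in> borel_measurable D"
    and "t \<ge> 0"
  shows "measure (PiM UNIV (\<lambda>_::nat. D)) {xs \<in> space (PiM UNIV (\<lambda>_::nat. D)).
            \<bar>emp_dis M h g xs - rho D h g\<bar> \<ge> t} \<le> 2 * exp (-2 * real M * t\<^sup>2)"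
proof (cases "M = 0")
  case True
  interpret prob_space "PiM UNIV (\<lambda>_::nat. D)" by (simp add: D prob_space_PiM)
  have "1 \<le> 2 * exp (-2 * real M * t\<^sup>2)" using True by simp
  then show ?thesis using prob_le_1 by (rule order.trans[rotated])
next
  case False
  interpret PP: product_prob_space "\<lambda>_::nat. D" UNIV
    by (simp add: D product_prob_space.intro product_prob_space_axioms.intro
        product_sigma_finite.intro prob_space_imp_sigma_finite)
  let ?Pi = "PiM UNIV (\<lambda>_::nat. D)"
  define f where "f x = (if h x \<noteq> g x then 1 else 0 :: real)" for x
  have [measurable]: "f \<in> borel_measurable D" unfolding f_def by measurable
  have coords_indep: "PP.indep_vars (\<lambda>_. D) (\<lambda>i xs. xs i) {..<M}"
    using False by (intro PP.indep_vars_coordinates) auto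
  have "PP.indep_vars (\<lambda>_. borel) (\<lambda>i xs. f (xs i)) {..<M}"
    using PP.indep_vars_compose[OF coords_indep, of "\<lambda>_. f" "\<lambda>_. borel"] by (simp add: o_def)
  moreover have identically_distributed: "distr ?Pi borel (\<lambda>xs. f (xs i)) = distr D borel f" for i
  proof -
    have "distr ?Pi borel (\<lambda>xs. f (xs i)) = distr (distr ?Pi D (\<lambda>xs. xs i)) borel f"
      by (subst distr_distr) (auto simp: o_def)
    then show ?thesis by (simp add: PP.PiM_component)
  qed
  ultimately interpret Hoeffding_ineq_iid ?Pi "{..<M}" "\<lambda>i xs. f (xs i)" "\<lambda>xs. f (xs 0)" 0 1
      "\<integral>xs. f (xs 0) \<partial>?Pi"
  proof unfold_locales
    show "distr ?Pi borel (\<lambda>xs. f (xs i)) = distr ?Pi borel (\<lambda>xs. f (xs 0))" for i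
      by (simp only: identically_distributed)
  qed (auto simp: f_def)
  have "(\<integral>xs. f (xs 0) \<partial>?Pi) = (\<integral>x. f x \<partial>distr ?Pi D (\<lambda>xs. xs 0))"
    by (subst integral_distr) auto
  also have "\<dots> = rho D h g"
    by (simp add: PP.PiM_component f_def rho_eq_expectation)
  finally have mean: "(\<integral>xs. f (xs 0) \<partial>?Pi) = rho D h g" .
  have "emp_dis M h g xs = (\<Sum>i\<in>{..<M}. f (xs i)) / real (card {..<M})" for xs
    by (simp add: emp_dis_def f_def)
  then show ?thesis
    using Hoeffding_ineq_abs_ge'[of t] \<open>t \<ge> 0\<close> \<open>M \<noteq> 0\<close> by (simp only: mean) (simp add: lessThan_empty_iff)
qed

lemma measure_pair_le_of_sections:
  assumes "prob_space P" "prob_space R" and S: "S \<in> sets (P \<Otimes>\<^sub>M R)"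
    and "c \<ge> 0" and sections: "\<And>\<omega>. \<omega> \<in> space P \<Longrightarrow> measure R (Pair \<omega> -` S) \<le> c"
  shows "measure (P \<Otimes>\<^sub>M R) S \<le> c"
proof -
  interpret P: prob_space P by fact
  interpret R: prob_space R by fact
  have "emeasure (P \<Otimes>\<^sub>M R) S = (\<integral>\<^sup>+ \<omega>. emeasure R (Pair \<omega> -` S) \<partial>P)"
    by (rule R.emeasure_pair_measure_alt[OF S])
  also have "\<dots> \<le> (\<integral>\<^sup>+ \<omega>. ennreal c \<partial>P)"
    using sections by (intro nn_integral_mono) (simp add: R.emeasure_eq_measure ennreal_leI)
  also have "\<dots> = ennreal c" by (simp add: P.emeasure_space_1)
  finally show ?thesis using \<open>c \<ge> 0\<close> by (simp add: measure_def enn2real_leI)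
qed

lemma measurable_rho_section:
  fixes hh :: "'w \<Rightarrow> 'x \<Rightarrow> 'y::{second_countable_topology, t2_space}"
  assumes "sigma_finite_measure D"
    and [measurable]: "(\<lambda>(\<omega>, x). hh \<omega> x) \<in> borel_measurable (P \<Otimes>\<^sub>M D)" "g \<in> borel_measurable D"
  shows "(\<lambda>\<omega>. rho D (hh \<omega>) g) \<in> borel_measurable P"
proof -
  interpret D: sigma_finite_measure D by fact
  define S where "S = {z \<in> space (P \<Otimes>\<^sub>M D). hh (fst z) (snd z) \<noteq> g (snd z)}"
  have [measurable]: "(\<lambda>z. hh (fst z) (snd z)) \<in> borel_measurable (P \<Otimes>\<^sub>M D)"
    using assms(2) by (simp add: case_prod_beta')
  have "S \<in> sets (P \<Otimes>\<^sub>M D)" unfolding S_def by measurable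
  then have "(\<lambda>\<omega>. enn2real (emeasure D (Pair \<omega> -` S))) \<in> borel_measurable P"
    by (intro borel_measurable_enn2real D.measurable_emeasure_Pair)
  moreover have "enn2real (emeasure D (Pair \<omega> -` S)) = rho D (hh \<omega>) g" if "\<omega> \<in> space P" for \<omega>
  proof -
    have "Pair \<omega> -` S = {x \<in> space D. hh \<omega> x \<noteq> g x}"
      using that by (auto simp: S_def space_pair_measure)
    then show ?thesis by (simp add: rho_def measure_def)
  qed
  ultimately show ?thesis by (rule measurable_cong[THEN iffD1, rotated])
qed

lemma measurable_emp_dis:
  fixes hh :: "'w \<Rightarrow> 'x \<Rightarrow> 'y::{second_countable_topology, t2_space}"
  assumes hh: "(\<lambda>(\<omega>, x). hh \<omega> x) \<in> borel_measurable (P \<Otimes>\<^sub>M D)" and [measurable]: "g \<in> borel_measurable D"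
  shows "(\<lambda>z. emp_dis M (hh (fst z)) g (snd z)) \<in> borel_measurable (P \<Otimes>\<^sub>M PiM UNIV (\<lambda>_::nat. D))"
proof -
  have [measurable]: "(\<lambda>z. hh (fst z) (snd z j)) \<in> borel_measurable (P \<Otimes>\<^sub>M PiM UNIV (\<lambda>_::nat. D))" for j
    using measurable_compose[OF _ hh, of "\<lambda>z. (fst z, snd z j)"] by simp
  show ?thesis unfolding emp_dis_def by measurable
qed

lemma Lopt_nonneg: "Lopt D H g x \<ge> 0"
  unfolding Lopt_def by (rule INF_greatest) (simp add: rho_def)

lemma Lopt_le_LNM_add:
  assumes "HN \<subseteq> H" and dev: "\<forall>h\<in>HN. \<bar>emp_dis M h g xs - rho D h g\<bar> \<le> t"
  shows "Lopt D H g x \<le> LNM HN M g x xs + ereal t"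
proof -
  have "Lopt D H g x - ereal t \<le> LNM HN M g x xs"
    unfolding LNM_def
  proof (rule INF_greatest)
    fix h assume h: "h \<in> disagree_set HN g x"
    then have "Lopt D H g x \<le> ereal (rho D h g)"
      using \<open>HN \<subseteq> H\<close> unfolding Lopt_def disagree_set_def by (auto intro: INF_lower)
    also have "\<dots> \<le> ereal (emp_dis M h g xs) + ereal t"
      using dev h by (auto simp: disagree_set_def)
    finally show "Lopt D H g x - ereal t \<le> ereal (emp_dis M h g xs)"
      by (simp add: ereal_minus_le_iff)
  qed
  then show ?thesis by (simp add: ereal_minus_le_iff)
qed

lemma LNM_le_LNM_add:
  assumes "HN \<subseteq> H" and dev: "\<forall>h\<in>HN. \<bar>emp_dis M h g xs - rho D h g\<bar> \<le> t"
    and h0: "h0 \<in> disagree_set HN g xi"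
    and gap: "ereal (rho D h0 g + 2 * t) \<le> Lopt D H g xj + ereal \<epsilon>"
  shows "LNM HN M g xi xs \<le> LNM HN M g xj xs + ereal \<epsilon>"
proof -
  have "LNM HN M g xi xs \<le> ereal (emp_dis M h0 g xs)"
    using h0 unfolding LNM_def by (rule INF_lower)
  then have "LNM HN M g xi xs + ereal t \<le> ereal (emp_dis M h0 g xs + t)"
    by (metis add_right_mono plus_ereal.simps(1))
  also have "\<dots> \<le> ereal (rho D h0 g + 2 * t)"
    using dev h0 by (auto simp: disagree_set_def)
  also have "\<dots> \<le> Lopt D H g xj + ereal \<epsilon>" by (fact gap)
  also have "\<dots> \<le> LNM HN M g xj xs + ereal \<epsilon> + ereal t"
    using Lopt_le_LNM_add[OF assms(1,2), of xj] by (metis add_right_mono add.assoc add.commute)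
  finally show ?thesis by (simp add: ereal_add_le_add_iff2)
qed

lemma mult_exp_neg_tendsto_zero:
  fixes Ms Ns :: "nat \<Rightarrow> nat" and C c :: real
  assumes "C \<ge> 1" and "c > 0" and Ns: "filterlim Ns at_top sequentially"
    and Ms: "filterlim (\<lambda>n. real (Ms n) / ln (C * real (Ns n))) at_top sequentially"
  shows "(\<lambda>n. real (Ns n) * exp (- c * real (Ms n))) \<longlonglongrightarrow> 0"
proof (rule tendsto_sandwich)
  show "eventually (\<lambda>n. 0 \<le> real (Ns n) * exp (- c * real (Ms n))) sequentially" by simp
  have "eventually (\<lambda>n. Ns n \<ge> 1 \<and> real (Ms n) / ln (C * real (Ns n)) \<ge> 2 / c) sequentially"
    using Ns Ms by (auto simp: filterlim_at_top intro: eventually_conj)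
  then show "eventually (\<lambda>n. real (Ns n) * exp (- c * real (Ms n)) \<le> 1 / real (Ns n)) sequentially"
  proof eventually_elim
    case (elim n)
    define N where "N = real (Ns n)"
    have "N \<ge> 1" using elim by (simp add: N_def)
    have "0 < 2 / c" using \<open>c > 0\<close> by simp
    also have "\<dots> \<le> real (Ms n) / ln (C * N)" using elim by (simp add: N_def)
    finally have "ln (C * N) > 0" by (simp add: zero_less_divide_iff)
    then have "c * real (Ms n) \<ge> 2 * ln (C * N)"
      using elim \<open>c > 0\<close> by (simp add: N_def field_simps)
    moreover have "ln (C * N) \<ge> ln N"
      using \<open>C \<ge> 1\<close> \<open>N \<ge> 1\<close> by (simp add: mult_le_cancel_right1)
    ultimately have "exp (- c * real (Ms n)) \<le> exp (- 2 * ln N)" by simp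
    also have "\<dots> = 1 / N\<^sup>2"
      using \<open>N \<ge> 1\<close> by (simp add: exp_double exp_minus')
    finally have "N * exp (- c * real (Ms n)) \<le> N * (1 / N\<^sup>2)"
      using \<open>N \<ge> 1\<close> by (intro mult_left_mono) auto
    then show ?case using \<open>N \<ge> 1\<close> by (simp add: N_def power2_eq_square)
  qed
  have "filterlim (\<lambda>n. real (Ns n)) at_top sequentially"
    by (rule filterlim_compose[OF filterlim_real_sequentially Ns])
  then show "(\<lambda>n. 1 / real (Ns n)) \<longlonglongrightarrow> 0"
    by (intro tendsto_divide_0[OF tendsto_const]) (simp add: filterlim_at_top_imp_at_infinity)
qed simp

lemma cover_with_vanishing_measure:
  assumes "\<And>n. E n \<subseteq> space M"
    and small: "eventually (\<lambda>n. \<exists>A\<in>sets M. E n \<subseteq> A \<and> measure M A \<le> u n) sequentially"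
    and "u \<longlonglongrightarrow> 0"
  shows "\<exists>A. (\<forall>n. A n \<in> sets M \<and> E n \<subseteq> A n) \<and> (\<lambda>n. measure M (A n)) \<longlonglongrightarrow> 0"
proof -
  define A where "A n = (if \<exists>A\<in>sets M. E n \<subseteq> A \<and> measure M A \<le> u n
    then SOME A. A \<in> sets M \<and> E n \<subseteq> A \<and> measure M A \<le> u n else space M)" for n
  have A: "A n \<in> sets M \<and> E n \<subseteq> A n" for n
    using someI_ex[of "\<lambda>A. A \<in> sets M \<and> E n \<subseteq> A \<and> measure M A \<le> u n"] assms(1)
    by (auto simp: A_def)
  have "eventually (\<lambda>n. measure M (A n) \<le> u n) sequentially"
    using small
  proof eventually_elim
    case (elim n)
    then show ?case
      using someI_ex[of "\<lambda>A. A \<in> sets M \<and> E n \<subseteq> A \<and> measure M A \<le> u n"]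
      by (auto simp: A_def)
  qed
  then have "(\<lambda>n. measure M (A n)) \<longlonglongrightarrow> 0"
    by (intro tendsto_sandwich[OF _ _ tendsto_const \<open>u \<longlonglongrightarrow> 0\<close>]) auto
  with A show ?thesis by blast
qed

locale hypothesis_sampling =
  D: prob_space D + P: prob_space P
  for D :: "'x measure" and P :: "'w measure"
    and H :: "('x \<Rightarrow> 'y::{second_countable_topology, t2_space}) set"
    and d :: "('x \<Rightarrow> 'y) \<Rightarrow> ('x \<Rightarrow> 'y) \<Rightarrow> real" and B :: real
    and g :: "'x \<Rightarrow> 'y" and hN :: "'w \<Rightarrow> nat \<Rightarrow> 'x \<Rightarrow> 'y" +
  assumes H_meas: "\<And>h. h \<in> H \<Longrightarrow> h \<in> borel_measurable D"
    and g_in: "g \<in> H"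
    and B_pos: "B > 0"
    and lipschitz: "\<And>h h'. h \<in> H \<Longrightarrow> h' \<in> H \<Longrightarrow> rho D h h' \<le> B * d h h'"
    and hN_in: "\<And>\<omega> k. \<omega> \<in> space P \<Longrightarrow> hN \<omega> k \<in> H"
    and hN_meas: "\<And>k. (\<lambda>(\<omega>, x). hN \<omega> k x) \<in> borel_measurable (P \<Otimes>\<^sub>M D)"
begin

abbreviation joint :: "('w \<times> (nat \<Rightarrow> 'x)) measure" where
  "joint \<equiv> P \<Otimes>\<^sub>M PiM UNIV (\<lambda>_::nat. D)"

definition deviation_event :: "nat \<Rightarrow> real \<Rightarrow> nat \<Rightarrow> ('w \<times> (nat \<Rightarrow> 'x)) set" where
  "deviation_event M t k = {z \<in> space joint.
     t \<le> \<bar>emp_dis M (hN (fst z) k) g (snd z) - rho D (hN (fst z) k) g\<bar>}"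

definition gap_event :: "nat \<Rightarrow> nat \<Rightarrow> 'x \<Rightarrow> 'x \<Rightarrow> real \<Rightarrow> ('w \<times> (nat \<Rightarrow> 'x)) set" where
  "gap_event N M xi xj \<epsilon> = {z \<in> space joint.
     LNM (hN (fst z) ` {..<N}) M g xi (snd z) > LNM (hN (fst z) ` {..<N}) M g xj (snd z) + ereal \<epsilon>}"

definition cover_radius :: "('x \<Rightarrow> 'y) set \<Rightarrow> 'x \<Rightarrow> real \<Rightarrow> ereal" where
  "cover_radius HN x e = (INF hs\<in>{hs \<in> disagree_set H g x. ereal (rho D hs g) - Lopt D H g x \<le> ereal e}.
     INF h\<in>disagree_set HN g x. ereal (d hs h))"

lemma g_meas [measurable]: "g \<in> borel_measurable D"
  using H_meas g_in .

lemma sets_deviation_event [measurable]: "deviation_event M t k \<in> sets joint"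
proof -
  have [measurable]: "(\<lambda>z. emp_dis M (hN (fst z) k) g (snd z)) \<in> borel_measurable joint"
    by (rule measurable_emp_dis[OF hN_meas g_meas])
  have "(\<lambda>\<omega>. rho D (hN \<omega> k) g) \<in> borel_measurable P"
    by (rule measurable_rho_section[OF _ hN_meas g_meas]) unfold_locales
  then have [measurable]: "(\<lambda>z. rho D (hN (fst z) k) g) \<in> borel_measurable joint"
    by measurable
  show ?thesis unfolding deviation_event_def by measurable
qed

lemma measure_deviation_event_le:
  assumes "t \<ge> 0"
  shows "measure joint (deviation_event M t k) \<le> 2 * exp (-2 * real M * t\<^sup>2)"
proof (rule measure_pair_le_of_sections)
  show "prob_space (PiM UNIV (\<lambda>_::nat. D))"
    by (simp add: D.prob_space_axioms prob_space_PiM)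
  fix \<omega> assume \<omega>: "\<omega> \<in> space P"
  have "Pair \<omega> -` deviation_event M t k = {xs \<in> space (PiM UNIV (\<lambda>_::nat. D)).
          t \<le> \<bar>emp_dis M (hN \<omega> k) g xs - rho D (hN \<omega> k) g\<bar>}"
    using \<omega> by (auto simp: deviation_event_def space_pair_measure)
  then show "measure (PiM UNIV (\<lambda>_::nat. D)) (Pair \<omega> -` deviation_event M t k) \<le> 2 * exp (-2 * real M * t\<^sup>2)"
    using emp_dis_hoeffding[OF D.prob_space_axioms H_meas[OF hN_in[OF \<omega>]] g_meas \<open>t \<ge> 0\<close>] by simp
qed (simp_all add: P.prob_space_axioms)

lemma near_optimal_of_cover:
  assumes "HN \<subseteq> H" and "cover_radius HN x e < ereal (r / B)"
  shows "\<exists>h\<in>disagree_set HN g x. ereal (rho D h g) < Lopt D H g x + ereal (e + r)"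
proof -
  obtain hs h where hs: "hs \<in> disagree_set H g x" "ereal (rho D hs g) - Lopt D H g x \<le> ereal e"
    and h: "h \<in> disagree_set HN g x" and dist: "d hs h < r / B"
    using assms(2) by (auto simp: cover_radius_def INF_less_iff)
  have [measurable]: "hs \<in> borel_measurable D" "h \<in> borel_measurable D" and "hs \<in> H" "h \<in> H"
    using hs h \<open>HN \<subseteq> H\<close> H_meas by (auto simp: disagree_set_def)
  have "rho D h g \<le> rho D hs h + rho D hs g"
    using rho_triangle[of D h hs g] by (simp add: rho_commute)
  also have "\<dots> < r + rho D hs g"
    using lipschitz[OF \<open>hs \<in> H\<close> \<open>h \<in> H\<close>] dist B_pos by (simp add: field_simps)
  finally have "ereal (rho D h g) < ereal (rho D hs g) + ereal r" by simp
  also have "\<dots> \<le> Lopt D H g x + ereal (e + r)"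
    using hs(2) Lopt_nonneg[of D H g x] by (cases "Lopt D H g x") (auto simp: ereal_minus_le_iff)
  finally show ?thesis using h by blast
qed

lemma gap_event_subset:
  assumes covered: "\<And>\<omega>. \<omega> \<in> C \<Longrightarrow> cover_radius (hN \<omega> ` {..<N}) xi e < ereal (r / B)"
    and L_le: "Lopt D H g xi \<le> Lopt D H g xj" and margin: "e + r + 2 * t \<le> \<epsilon>"
  shows "gap_event N M xi xj \<epsilon> \<subseteq> (space P - C) \<times> space (PiM UNIV (\<lambda>_::nat. D)) \<union> (\<Union>k<N. deviation_event M t k)"
    (is "_ \<subseteq> ?A")
proof
  fix z assume z: "z \<in> gap_event N M xi xj \<epsilon>"
  show "z \<in> ?A"
  proof (rule ccontr)
    assume "z \<notin> ?A"
    obtain \<omega> xs where z_eq: "z = (\<omega>, xs)" by fastforce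
    let ?HN = "hN \<omega> ` {..<N}"
    have "\<omega> \<in> C" and "\<omega> \<in> space P"
      using z \<open>z \<notin> ?A\<close> by (auto simp: gap_event_def z_eq space_pair_measure)
    have HN: "?HN \<subseteq> H" using hN_in[OF \<open>\<omega> \<in> space P\<close>] by blast
    have dev: "\<forall>h\<in>?HN. \<bar>emp_dis M h g xs - rho D h g\<bar> \<le> t"
      using z \<open>z \<notin> ?A\<close>
      by (force simp: deviation_event_def gap_event_def z_eq not_le intro: less_imp_le)
    obtain h0 where h0: "h0 \<in> disagree_set ?HN g xi"
      and "ereal (rho D h0 g) < Lopt D H g xi + ereal (e + r)"
      using near_optimal_of_cover[OF HN covered[OF \<open>\<omega> \<in> C\<close>]] by blast
    then have "ereal (rho D h0 g + 2 * t) \<le> Lopt D H g xj + ereal \<epsilon>"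
      using L_le margin Lopt_nonneg[of D H g xi]
      by (cases "Lopt D H g xi"; cases "Lopt D H g xj") auto
    then have "LNM ?HN M g xi xs \<le> LNM ?HN M g xj xs + ereal \<epsilon>"
      by (rule LNM_le_LNM_add[OF HN dev h0])
    with z show False by (auto simp: gap_event_def z_eq)
  qed
qed

lemma gap_event_bound:
  assumes cover: "\<exists>C\<in>sets P. measure P C \<ge> 1 - b \<and>
      (\<forall>\<omega>\<in>C. cover_radius (hN \<omega> ` {..<N}) xi e \<le> ereal (a / B))"
    and L_le: "Lopt D H g xi \<le> Lopt D H g xj"
    and margin: "e + a + 2 * t < \<epsilon>" and "t \<ge> 0"
  shows "\<exists>A\<in>sets joint. gap_event N M xi xj \<epsilon> \<subseteq> A \<and>
           measure joint A \<le> b + 2 * real N * exp (-2 * real M * t\<^sup>2)"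
proof -
  let ?R = "PiM UNIV (\<lambda>_::nat. D)"
  interpret R: prob_space ?R by (simp add: D.prob_space_axioms prob_space_PiM)
  obtain C where C: "C \<in> sets P" "measure P C \<ge> 1 - b"
    and le: "\<And>\<omega>. \<omega> \<in> C \<Longrightarrow> cover_radius (hN \<omega> ` {..<N}) xi e \<le> ereal (a / B)"
    using cover by blast
  have "ereal (a / B) < ereal ((\<epsilon> - e - 2 * t) / B)"
    using margin B_pos by (simp add: divide_strict_right_mono)
  then have covered: "cover_radius (hN \<omega> ` {..<N}) xi e < ereal ((\<epsilon> - e - 2 * t) / B)"
    if "\<omega> \<in> C" for \<omega>
    by (rule order.strict_trans1[OF le[OF that]])
  have "e + (\<epsilon> - e - 2 * t) + 2 * t \<le> \<epsilon>" by simp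
  from gap_event_subset[OF covered L_le this]
  have "gap_event N M xi xj \<epsilon> \<subseteq> (space P - C) \<times> space ?R \<union> (\<Union>k<N. deviation_event M t k)" .
  moreover have "measure joint ((space P - C) \<times> space ?R) \<le> b"
  proof -
    have "emeasure joint ((space P - C) \<times> space ?R) = emeasure P (space P - C)"
      using C(1) by (simp add: R.emeasure_pair_measure_Times R.emeasure_space_1)
    then have "measure joint ((space P - C) \<times> space ?R) = measure P (space P - C)"
      by (simp add: measure_def)
    also have "\<dots> \<le> b" using C P.prob_compl by simp
    finally show ?thesis .
  qed
  moreover have "measure joint (\<Union>k<N. deviation_event M t k) \<le> (\<Sum>k<N. 2 * exp (-2 * real M * t\<^sup>2))"
    by (rule order.trans[OF measure_UNION_le sum_mono])
      (use measure_deviation_event_le[OF \<open>t \<ge> 0\<close>] in auto)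
  ultimately show ?thesis
    using C(1) by (intro bexI[of _ "(space P - C) \<times> space ?R \<union> (\<Union>k<N. deviation_event M t k)"])
      (auto intro!: pair_measureI order.trans[OF measure_Un_le])
qed

lemma gap_event_tendsto_zero:
  fixes \<alpha> \<beta> :: "nat \<Rightarrow> real" and Ms Ns :: "nat \<Rightarrow> nat" and C :: real
  assumes cover: "\<And>N. \<exists>C\<in>sets P. measure P C \<ge> 1 - \<beta> N \<and>
      (\<forall>\<omega>\<in>C. cover_radius (hN \<omega> ` {..<N}) xi e \<le> ereal (\<alpha> N / B))"
    and "\<alpha> \<longlonglongrightarrow> 0" "\<beta> \<longlonglongrightarrow> 0"
    and L_le: "Lopt D H g xi \<le> Lopt D H g xj" and "e < \<epsilon>"
    and "C \<ge> 1" and Ns: "filterlim Ns at_top sequentially"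
    and Ms: "filterlim (\<lambda>n. real (Ms n) / ln (C * real (Ns n))) at_top sequentially"
  shows "\<exists>A. (\<forall>n. A n \<in> sets joint \<and> gap_event (Ns n) (Ms n) xi xj \<epsilon> \<subseteq> A n) \<and>
           (\<lambda>n. measure joint (A n)) \<longlonglongrightarrow> 0"
proof -
  define t where "t = (\<epsilon> - e) / 4"
  have "t > 0" using \<open>e < \<epsilon>\<close> by (simp add: t_def)
  let ?bound = "\<lambda>n. \<beta> (Ns n) + 2 * real (Ns n) * exp (-2 * real (Ms n) * t\<^sup>2)"
  show ?thesis
  proof (rule cover_with_vanishing_measure[where u = ?bound])
    show "gap_event (Ns n) (Ms n) xi xj \<epsilon> \<subseteq> space joint" for n
      by (auto simp: gap_event_def)
    have "eventually (\<lambda>n. \<alpha> (Ns n) < (\<epsilon> - e) / 2) sequentially"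
      using filterlim_compose[OF \<open>\<alpha> \<longlonglongrightarrow> 0\<close> Ns] \<open>e < \<epsilon>\<close> by (intro order_tendstoD(2)) auto
    then show "eventually (\<lambda>n. \<exists>A\<in>sets joint. gap_event (Ns n) (Ms n) xi xj \<epsilon> \<subseteq> A \<and>
        measure joint A \<le> ?bound n) sequentially"
    proof eventually_elim
      case (elim n)
      then have "e + \<alpha> (Ns n) + 2 * t < \<epsilon>" by (simp add: t_def field_simps)
      then show ?case using \<open>t > 0\<close> by (intro gap_event_bound[OF cover L_le]) auto
    qed
    have "(\<lambda>n. real (Ns n) * exp (- (2 * t\<^sup>2) * real (Ms n))) \<longlonglongrightarrow> 0"
      using \<open>t > 0\<close> by (intro mult_exp_neg_tendsto_zero[OF \<open>C \<ge> 1\<close> _ Ns Ms]) simp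
    then have "(\<lambda>n. 2 * (real (Ns n) * exp (- (2 * t\<^sup>2) * real (Ms n)))) \<longlonglongrightarrow> 0"
      by (rule tendsto_mult_right_zero)
    with filterlim_compose[OF \<open>\<beta> \<longlonglongrightarrow> 0\<close> Ns]
    have "(\<lambda>n. \<beta> (Ns n) + 2 * (real (Ns n) * exp (- (2 * t\<^sup>2) * real (Ms n)))) \<longlonglongrightarrow> 0"
      by (rule tendsto_add_zero)
    then show "?bound \<longlonglongrightarrow> 0" by (simp add: mult_ac)
  qed
qed

end

theorem corollary1:
  fixes D :: "'x measure"
    and P :: "'w measure"
    and H :: "('x \<Rightarrow> real^'c) set"
    and d :: "('x \<Rightarrow> real^'c) \<Rightarrow> ('x \<Rightarrow> real^'c) \<Rightarrow> real"
    and B :: real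
    and g :: "'x \<Rightarrow> real^'c"
    and hN :: "'w \<Rightarrow> nat \<Rightarrow> 'x \<Rightarrow> real^'c"
    and xi xj :: 'x
    and \<epsilon> :: real
  assumes C2: "CARD('c) \<ge> 2"
    and D_prob: "prob_space D" and D_space: "space D = UNIV"
    and H_vals: "\<forall>h\<in>H. \<forall>x. h x \<in> onehots"
    and H_meas: "\<forall>h\<in>H. h \<in> borel_measurable D"
    and g_in: "g \<in> H"
    and polish: "Metric_space H d" "Metric_space.mcomplete H d"
                "separable_space (Metric_space.mtopology H d)"
    and B_pos: "B > 0"
    and lip: "\<forall>h\<in>H. \<forall>h'\<in>H. rho D h h' \<le> B * d h h'"
    and P_prob: "prob_space P"
    and hN_in: "\<forall>\<omega>\<in>space P. \<forall>n. hN \<omega> n \<in> H"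
    and hN_inj: "\<forall>\<omega>\<in>space P. inj (hN \<omega>)"
    and hN_meas: "\<forall>n. (\<lambda>(\<omega>, x). hN \<omega> n x) \<in> borel_measurable (P \<Otimes>\<^sub>M D)"
    and coverage: "\<forall>x0\<in>{xi, xj}. \<exists>(\<alpha> :: nat \<Rightarrow> real \<Rightarrow> real) (\<beta> :: nat \<Rightarrow> real).
         (\<forall>N e. e \<ge> 0 \<longrightarrow> \<alpha> N e \<ge> 0) \<and> (\<forall>N. \<beta> N > 0) \<and>
         (\<forall>e\<in>{0<..<1}. (\<lambda>N. \<alpha> N e) \<longlonglongrightarrow> 0) \<and> \<beta> \<longlonglongrightarrow> 0 \<and>
         (\<forall>N. \<forall>e\<in>{0<..<1}. \<exists>A\<in>sets P. measure P A \<ge> 1 - \<beta> N \<and>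
            (\<forall>\<omega>\<in>A.
              (INF hs\<in>{hs \<in> disagree_set H g x0. ereal (rho D hs g) - Lopt D H g x0 \<le> ereal e}.
                 INF h\<in>disagree_set (hN \<omega> ` {..<N}) g x0. ereal (d hs h))
              \<le> ereal (\<alpha> N e / B)))"
    and Lless: "Lopt D H g xi < Lopt D H g xj"
    and eps: "\<epsilon> > 0"
  shows "\<forall>(Ms :: nat \<Rightarrow> nat) (Ns :: nat \<Rightarrow> nat).
           filterlim Ns at_top sequentially \<and>
           filterlim (\<lambda>n. real (Ms n) / ln (real CARD('c) * real (Ns n))) at_top sequentially
           \<longrightarrow> (\<exists>A :: nat \<Rightarrow> ('w \<times> (nat \<Rightarrow> 'x)) set.
                 (\<forall>n. A n \<in> sets (P \<Otimes>\<^sub>M PiM UNIV (\<lambda>_::nat. D)) \<and>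
                      {z \<in> space (P \<Otimes>\<^sub>M PiM UNIV (\<lambda>_::nat. D)).
                         LNM (hN (fst z) ` {..<Ns n}) (Ms n) g xi (snd z)
                           > LNM (hN (fst z) ` {..<Ns n}) (Ms n) g xj (snd z) + ereal \<epsilon>}
                      \<subseteq> A n) \<and>
                 (\<lambda>n. measure (P \<Otimes>\<^sub>M PiM UNIV (\<lambda>_::nat. D)) (A n)) \<longlonglongrightarrow> 0)"
proof (intro allI impI)
  fix Ms Ns :: "nat \<Rightarrow> nat"
  assume limits: "filterlim Ns at_top sequentially \<and>
    filterlim (\<lambda>n. real (Ms n) / ln (real CARD('c) * real (Ns n))) at_top sequentially"
  interpret hypothesis_sampling D P H d B g hN
    using D_prob P_prob H_meas g_in B_pos lip hN_in hN_meas
    by (intro hypothesis_sampling.intro hypothesis_sampling_axioms.intro) auto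
  obtain \<alpha> \<beta> where \<alpha>: "\<forall>e\<in>{0<..<1}. (\<lambda>N. \<alpha> N e) \<longlonglongrightarrow> 0" and \<beta>: "\<beta> \<longlonglongrightarrow> 0"
    and cover: "\<forall>N. \<forall>e\<in>{0<..<1}. \<exists>C\<in>sets P. measure P C \<ge> 1 - \<beta> N \<and>
      (\<forall>\<omega>\<in>C. cover_radius (hN \<omega> ` {..<N}) xi e \<le> ereal (\<alpha> N e / B))"
    using coverage unfolding cover_radius_def by blast
  define e where "e = min (\<epsilon> / 2) (1 / 2)"
  have e: "e \<in> {0<..<1}" "e < \<epsilon>" using eps by (auto simp: e_def)
  have "real CARD('c) \<ge> 1" using C2 by simp
  have "(\<lambda>N. \<alpha> N e) \<longlonglongrightarrow> 0" using \<alpha> e(1) by blast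
  then have "\<exists>A. (\<forall>n. A n \<in> sets joint \<and> gap_event (Ns n) (Ms n) xi xj \<epsilon> \<subseteq> A n) \<and>
      (\<lambda>n. measure joint (A n)) \<longlonglongrightarrow> 0"
    using limits cover e(1)
    by (intro gap_event_tendsto_zero[OF _ _ \<beta> less_imp_le[OF Lless] e(2) \<open>real CARD('c) \<ge> 1\<close>]) auto
  then show "\<exists>A. (\<forall>n. A n \<in> sets joint \<and> {z \<in> space joint.
      LNM (hN (fst z) ` {..<Ns n}) (Ms n) g xi (snd z) > LNM (hN (fst z) ` {..<Ns n}) (Ms n) g xj (snd z) + ereal \<epsilon>} \<subseteq> A n) \<and>
      (\<lambda>n. measure joint (A n)) \<longlonglongrightarrow> 0"
    unfolding gap_event_def .
qed

end
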